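(* Let $0\le k\le n-1$ and let $(\rho,V)$ be an $R[P_n]$-module. Then $(\Phi^-)^kV\simeq V_{U_{n,k},\psi_R}$, the $(U_{n,k},\psi_R)$-coinvariants of $V$. In particular, the $n$-th derivative satisfies $V^{(n)}\simeq V_{N_n,\psi_R}$.
   Context: Let $p$ be a prime, $q$ a power of $p$, $G_n=\mathrm{GL}_n(\mathbb{F}_q)$, $R$ a commutative Noetherian $\mathbb{Z}[\frac1p,\zeta_p]$-algebra, $\psi:(\mathbb{F}_q,+)\to\mathbb{Z}[\frac1p,\zeta_p]^\times$ nontrivial with image $\psi_R$ in $R^\times$. $P_n$ is the mirabolic subgroup (last row $(0,\dots,0,1)$), $U_n=\{\begin{psmallmatrix}I_{n-1}&y\\0&1\end{psmallmatrix}\}$, $N_n$ the upper unipotent subgroup, and $U_{n,k}=\{\begin{psmallmatrix}I_{n-k}&z\\0&y\end{psmallmatrix}:z\in\mathrm{Mat}_{n-k,k}(\mathbb{F}_q),y\in N_k\}$ (so $U_{n,1}=U_n$, $U_{n,n-1}=N_n$). On $U_{n,k}$ (and $N_n$), $\psi_R(u)=\psi_R(\sum_{i=1}^{n-1}u_{i,i+1})$. $V_{H,\psi_R}=V/\langle hv-\psi_R(h)v\rangle$. For an $R[P_n]$-module $V$, $\Phi^-(V)=V/\langle uv-\psi_R(u)v:u\in U_n\rangle$, an $R[P_{n-1}]$-module ($P_{n-1}\subset G_{n-1}$ embedded top-left); $\Psi^-(V)=V/\langle uv-v:u\in U_n\rangle$, an $R[G_{n-1}]$-module; the $k$-th derivative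 is $V^{(k)}=\Psi^-(\Phi^-)^{k-1}(V)$, and $\Psi^-$ on $R[P_1]$-modules is the identity. *)

theory Defs
  imports "HOL-Number_Theory.Number_Theory"
begin

definition ring_ideal :: "'r::comm_ring_1 set \<Rightarrow> bool" where
  "ring_ideal I \<longleftrightarrow> 0 \<in> I \<and> (\<forall>a\<in>I. \<forall>b\<in>I. a + b \<in> I) \<and> (\<forall>r. \<forall>a\<in>I. r * a \<in> I)"

definition noetherian :: "'r::comm_ring_1 itself \<Rightarrow> bool" where
  "noetherian _ \<longleftrightarrow> (\<forall>I::'r set. ring_ideal I \<longrightarrow>
      (\<exists>S. finite S \<and> S \<subseteq> I \<and> I = {\<Sum>s\<in>S. c s * s | c. True}))"

section \<open>Matrices of size n over a field, as functions nat => nat => 'f, zero outside n x n\<close>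

type_synonym 'f mat = "nat \<Rightarrow> nat \<Rightarrow> 'f"

definition canon :: "nat \<Rightarrow> 'f::field mat \<Rightarrow> bool" where
  "canon n A \<longleftrightarrow> (\<forall>i j. (n \<le> i \<or> n \<le> j) \<longrightarrow> A i j = 0)"

definition mone :: "nat \<Rightarrow> 'f::field mat" where
  "mone n = (\<lambda>i j. if i = j \<and> i < n then 1 else 0)"

definition mmult :: "nat \<Rightarrow> 'f::field mat \<Rightarrow> 'f mat \<Rightarrow> 'f mat" where
  "mmult n A B = (\<lambda>i j. if i < n \<and> j < n then (\<Sum>l<n. A i l * B l j) else 0)"

definition GL :: "nat \<Rightarrow> 'f::field mat set" where
  "GL n = {A. canon n A \<and> (\<exists>B. canon n B \<and> mmult n A B = mone n \<and> mmult n B A = mone n)}"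

definition Pmir :: "nat \<Rightarrow> 'f::field mat set" where
  "Pmir n = {A \<in> GL n. \<forall>j<n. A (n - 1) j = (if j = n - 1 then 1 else 0)}"

text \<open>U_{n,k} = {[[I_{n-k}, z],[0, y]] : y in N_k}. U_n = Unk n 1, N_n = Unk n (n-1).\<close>
definition Unk :: "nat \<Rightarrow> nat \<Rightarrow> 'f::field mat set" where
  "Unk n k = {A. canon n A \<and> (\<forall>i<n. \<forall>j<n.
      (j < n - k \<longrightarrow> A i j = (if i = j then 1 else 0)) \<and>
      (n - k \<le> i \<and> n - k \<le> j \<longrightarrow> (j < i \<longrightarrow> A i j = 0) \<and> (i = j \<longrightarrow> A i j = 1)))}"

text \<open>psi_R(u) = psi_R(sum_{i=1}^{n-1} u_{i,i+1}) (0-based indices here).\<close>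
definition psiU :: "('f::field \<Rightarrow> 'r) \<Rightarrow> nat \<Rightarrow> 'f mat \<Rightarrow> 'r" where
  "psiU \<psi> n u = \<psi> (\<Sum>i<n - 1. u i (Suc i))"

definition emb :: "nat \<Rightarrow> nat \<Rightarrow> 'f::field mat \<Rightarrow> 'f mat" where
  "emb m n A = (\<lambda>i j. if i < m \<and> j < m then A i j else if i = j \<and> i < n then 1 else 0)"

definition rmod :: "('r::comm_ring_1 \<Rightarrow> 'v::ab_group_add \<Rightarrow> 'v) \<Rightarrow> bool" where
  "rmod sm \<longleftrightarrow> (\<forall>r x y. sm r (x + y) = sm r x + sm r y) \<and>
     (\<forall>r s x. sm (r + s) x = sm r x + sm s x) \<and>
     (\<forall>r s x. sm (r * s) x = sm r (sm s x)) \<and> (\<forall>x. sm 1 x = x)"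

definition prep :: "nat \<Rightarrow> ('r::comm_ring_1 \<Rightarrow> 'v::ab_group_add \<Rightarrow> 'v) \<Rightarrow> ('f::field mat \<Rightarrow> 'v \<Rightarrow> 'v) \<Rightarrow> bool" where
  "prep n sm \<rho> \<longleftrightarrow> rmod sm \<and>
     (\<forall>g\<in>Pmir n. \<forall>r x y. \<rho> g (sm r x + y) = sm r (\<rho> g x) + \<rho> g y) \<and>
     (\<forall>x. \<rho> (mone n) x = x) \<and>
     (\<forall>g\<in>Pmir n. \<forall>h\<in>Pmir n. \<forall>x. \<rho> (mmult n g h) x = \<rho> g (\<rho> h x))"

definition submod :: "('r::comm_ring_1 \<Rightarrow> 'v::ab_group_add \<Rightarrow> 'v) \<Rightarrow> 'v set \<Rightarrow> bool" where
  "submod sm W \<longleftrightarrow> 0 \<in> W \<and> (\<forall>a\<in>W. \<forall>b\<in>W. a + b \<in> W) \<and> (\<forall>r. \<forall>a\<in>W. sm r a \<in> W)"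

definition rspan :: "('r::comm_ring_1 \<Rightarrow> 'v::ab_group_add \<Rightarrow> 'v) \<Rightarrow> 'v set \<Rightarrow> 'v set" where
  "rspan sm S = \<Inter>{W. submod sm W \<and> S \<subseteq> W}"

section \<open>Quotient modules V/W (elements are cosets)\<close>

definition coset :: "'v::ab_group_add set \<Rightarrow> 'v \<Rightarrow> 'v set" where
  "coset W x = (\<lambda>w. x + w) ` W"

definition quot :: "'v::ab_group_add set \<Rightarrow> 'v set set" where
  "quot W = range (coset W)"

definition qplus :: "'v::ab_group_add set \<Rightarrow> 'v set \<Rightarrow> 'v set" where
  "qplus A B = {a + b | a b. a \<in> A \<and> b \<in> B}"

definition qscale :: "('r \<Rightarrow> 'v::ab_group_add \<Rightarrow> 'v) \<Rightarrow> 'v set \<Rightarrow> 'r \<Rightarrow> 'v set \<Rightarrow> 'v set" where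
  "qscale sm W r A = {sm r a + w | a w. a \<in> A \<and> w \<in> W}"

definition qact :: "('g \<Rightarrow> 'v::ab_group_add \<Rightarrow> 'v) \<Rightarrow> 'v set \<Rightarrow> 'g \<Rightarrow> 'v set \<Rightarrow> 'v set" where
  "qact \<rho> W g A = {\<rho> g a + w | a w. a \<in> A \<and> w \<in> W}"

definition quot_iso :: "('r \<Rightarrow> 'v::ab_group_add \<Rightarrow> 'v) \<Rightarrow> ('g \<Rightarrow> 'v \<Rightarrow> 'v) \<Rightarrow> 'g set \<Rightarrow> 'v set \<Rightarrow> 'v set \<Rightarrow> bool" where
  "quot_iso sm \<rho> G W1 W2 \<longleftrightarrow> (\<exists>f. bij_betw f (quot W1) (quot W2) \<and>
     (\<forall>A\<in>quot W1. \<forall>B\<in>quot W1. f (qplus A B) = qplus (f A) (f B)) \<and>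
     (\<forall>r. \<forall>A\<in>quot W1. f (qscale sm W1 r A) = qscale sm W2 r (f A)) \<and>
     (\<forall>g\<in>G. \<forall>A\<in>quot W1. f (qact \<rho> W1 g A) = qact \<rho> W2 g (f A)))"

text \<open>(Phi^-)^k V = V / phi_sub k, a P_{n-k}-module with action rho o emb (n-k) n.
  Phi^- of V/W (a P_m-module, m = n-k) is V/W modulo the span of u v - psi(u) v, u in U_m;
  its preimage in V is W + span{rho(emb u) x - psi(u) x}.\<close>
fun phi_sub :: "nat \<Rightarrow> ('r::comm_ring_1 \<Rightarrow> 'v::ab_group_add \<Rightarrow> 'v) \<Rightarrow> ('f::field mat \<Rightarrow> 'v \<Rightarrow> 'v)
    \<Rightarrow> ('f \<Rightarrow> 'r) \<Rightarrow> nat \<Rightarrow> 'v set" where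
  "phi_sub n sm \<rho> \<psi> 0 = {0}"
| "phi_sub n sm \<rho> \<psi> (Suc k) = rspan sm (phi_sub n sm \<rho> \<psi> k \<union>
      {\<rho> (emb (n - k) n u) x - sm (psiU \<psi> (n - k) u) x | u x. u \<in> Unk (n - k) 1})"

text \<open>V^{(k)} = Psi^- (Phi^-)^{k-1} V (k >= 1), as a quotient of V.  For k = n, U_1 = {I_1},
  so Psi^- is the identity on P_1-modules, as in the paper's convention.\<close>
definition deriv_sub :: "nat \<Rightarrow> ('r::comm_ring_1 \<Rightarrow> 'v::ab_group_add \<Rightarrow> 'v) \<Rightarrow> ('f::field mat \<Rightarrow> 'v \<Rightarrow> 'v)
    \<Rightarrow> ('f \<Rightarrow> 'r) \<Rightarrow> nat \<Rightarrow> 'v set" where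
  "deriv_sub n sm \<rho> \<psi> k = rspan sm (phi_sub n sm \<rho> \<psi> (k - 1) \<union>
      {\<rho> (emb (n - k + 1) n u) x - x | u x. u \<in> Unk (n - k + 1) 1})"

text \<open>V_{U_{n,k},psi} = V / span{u x - psi(u) x : u in U_{n,k}}.\<close>
definition coinv_sub :: "nat \<Rightarrow> ('r::comm_ring_1 \<Rightarrow> 'v::ab_group_add \<Rightarrow> 'v) \<Rightarrow> ('f::field mat \<Rightarrow> 'v \<Rightarrow> 'v)
    \<Rightarrow> ('f \<Rightarrow> 'r) \<Rightarrow> nat \<Rightarrow> 'v set" where
  "coinv_sub n sm \<rho> \<psi> k = rspan sm {\<rho> u x - sm (psiU \<psi> n u) x | u x. u \<in> Unk n k}"

end

theory Submission
  imports Defs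
begin

(* Every module in sight is a quotient of V, so both isomorphisms are identities once the
   corresponding submodules of V coincide: the kernel of V -> (Phi^-)^k V must equal the span
   of the u x - psi(u) x with u in U_{n,k}.  By induction on k this rests on the factorisation
   U_{n,k+1} = U_{n,k} U_{n-k}: every u in U_{n,k+1} is b a, where b in U_{n,k} is u with its
   column n-k-1 replaced by the unit column and a is the column transvection carrying the
   remaining entries of that column, an element of the embedded U_{n-k}; moreover
   psi(u) = psi(b) psi(a), the superdiagonal sums being additive.  Then
   u x - psi(u) x = (b y - psi(b) y) + psi(b) (a x - psi(a) x) with y = a x.
   For the n-th derivative, Psi^- divides out U_1 = {1}, which adds nothing. *)

lemma rspan_superset: "S \<subseteq> rspan sm S"
  unfolding rspan_def by blast

lemma rspan_least: "submod sm W \<Longrightarrow> S \<subseteq> W \<Longrightarrow> rspan sm S \<subseteq> W"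
  unfolding rspan_def by blast

lemma submod_rspan: "submod sm (rspan sm S)"
  unfolding rspan_def submod_def by blast

lemma rspan_mono: "S \<subseteq> T \<Longrightarrow> rspan sm S \<subseteq> rspan sm T"
  unfolding rspan_def by blast

lemma rspan_Un_absorb:
  assumes "submod sm W" "S \<subseteq> W"
  shows "rspan sm (W \<union> S) = W"
  using assms rspan_superset[of "W \<union> S" sm] rspan_least[of sm W "W \<union> S"] by blast

lemma rmod_scale_zero:
  assumes "rmod sm" shows "sm r 0 = 0"
proof -
  have "sm r (0 + 0) = sm r 0 + sm r 0" using assms unfolding rmod_def by blast
  then show ?thesis by simp
qed

lemma rmod_scale_diff:
  assumes "rmod sm" shows "sm r (x - y) = sm r x - sm r y"
proof -
  have "sm r (x - y + y) = sm r (x - y) + sm r y" using assms unfolding rmod_def by blast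
  then show ?thesis by (simp add: eq_diff_eq)
qed

lemma submod_zero: "rmod sm \<Longrightarrow> submod sm {0}"
  by (simp add: submod_def rmod_scale_zero)

lemma submod_phi_sub: "rmod sm \<Longrightarrow> submod sm (phi_sub n sm \<rho> \<psi> k)"
  by (cases k) (simp_all add: submod_zero submod_rspan)

lemma phi_sub_mono_Suc: "phi_sub n sm \<rho> \<psi> k \<subseteq> phi_sub n sm \<rho> \<psi> (Suc k)"
  using rspan_superset by fastforce

lemma phi_sub_Suc_generator:
  "u \<in> Unk (n - k) 1 \<Longrightarrow>
     \<rho> (emb (n - k) n u) x - sm (psiU \<psi> (n - k) u) x \<in> phi_sub n sm \<rho> \<psi> (Suc k)"
  using rspan_superset by fastforce

lemma power_cong_eq:
  fixes \<zeta> :: "'a::monoid_mult"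
  assumes "\<zeta> ^ p = 1" and "[a = b] (mod p)"
  shows "\<zeta> ^ a = \<zeta> ^ b"
proof -
  have reduce: "\<zeta> ^ N = \<zeta> ^ (N mod p)" for N
  proof -
    have "\<zeta> ^ N = (\<zeta> ^ p) ^ (N div p) * \<zeta> ^ (N mod p)"
      by (simp flip: power_mult power_add)
    then show ?thesis using assms(1) by simp
  qed
  show ?thesis
    using reduce[of a] reduce[of b] assms(2) by (simp add: cong_def)
qed

lemma additive_character:
  fixes \<psi> :: "'a::monoid_add \<Rightarrow> 'r::comm_ring_1"
  assumes root: "\<zeta> ^ p = 1"
    and additive: "\<forall>x y. [\<chi> (x + y) = \<chi> x + \<chi> y] (mod p)"
    and \<psi>_def: "\<forall>x. \<psi> x = \<zeta> ^ \<chi> x"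
  shows "\<psi> (x + y) = \<psi> x * \<psi> y" and "\<psi> 0 = 1"
proof -
  have "\<zeta> ^ \<chi> (x + y) = \<zeta> ^ (\<chi> x + \<chi> y)"
    using power_cong_eq[OF root] additive by blast
  then show "\<psi> (x + y) = \<psi> x * \<psi> y"
    using \<psi>_def by (simp add: power_add)
  have "[\<chi> 0 + \<chi> 0 = \<chi> 0] (mod p)"
    using additive[rule_format, of 0 0] by (simp add: cong_sym)
  then have "[\<chi> 0 = 0] (mod p)"
    by (simp only: cong_add_lcancel_0_nat)
  then show "\<psi> 0 = 1"
    using power_cong_eq[OF root] \<psi>_def by (metis power_0)
qed

lemma mmult_assoc: "mmult n (mmult n A B) C = mmult n A (mmult n B C)"
proof (intro ext)
  fix i j
  show "mmult n (mmult n A B) C i j = mmult n A (mmult n B C) i j"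
  proof (cases "i < n \<and> j < n")
    case True
    have "(\<Sum>l<n. (\<Sum>m<n. A i m * B m l) * C l j) = (\<Sum>l<n. \<Sum>m<n. A i m * B m l * C l j)"
      by (simp add: sum_distrib_right)
    also have "\<dots> = (\<Sum>m<n. \<Sum>l<n. A i m * B m l * C l j)"
      by (rule sum.swap)
    also have "\<dots> = (\<Sum>m<n. A i m * (\<Sum>l<n. B m l * C l j))"
      by (simp add: sum_distrib_left mult.assoc)
    finally show ?thesis using True by (simp add: mmult_def)
  qed (auto simp: mmult_def)
qed

lemma mmult_mone_left: "canon n A \<Longrightarrow> mmult n (mone n) A = A"
  by (intro ext) (auto simp: mmult_def mone_def canon_def of_bool_def [symmetric])

lemma canon_mmult: "canon n (mmult n A B)"
  by (simp add: canon_def mmult_def)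

lemma canon_mone: "canon n (mone n)"
  by (simp add: canon_def mone_def)

lemma mone_GL: "mone n \<in> GL n"
  unfolding GL_def using canon_mone mmult_mone_left[OF canon_mone] by blast

lemma GL_mmult:
  assumes "g \<in> GL n" "h \<in> GL n"
  shows "mmult n g h \<in> GL n"
proof -
  obtain g' where g: "canon n g" "canon n g'" "mmult n g g' = mone n" "mmult n g' g = mone n"
    using assms(1) unfolding GL_def by blast
  obtain h' where h: "canon n h" "canon n h'" "mmult n h h' = mone n" "mmult n h' h = mone n"
    using assms(2) unfolding GL_def by blast
  have "mmult n (mmult n g h) (mmult n h' g') = mone n"
    by (metis g h mmult_assoc mmult_mone_left)
  moreover have "mmult n (mmult n h' g') (mmult n g h) = mone n"
    by (metis g h mmult_assoc mmult_mone_left)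
  ultimately show ?thesis
    unfolding GL_def using canon_mmult by blast
qed

lemma mone_Pmir: "mone n \<in> Pmir n"
  using mone_GL unfolding Pmir_def mone_def by auto

lemma Pmir_mmult:
  assumes "g \<in> Pmir n" "h \<in> Pmir n"
  shows "mmult n g h \<in> Pmir n"
proof -
  have "mmult n g h (n - 1) j = h (n - 1) j" if "j < n" for j
  proof -
    have "(\<Sum>l<n. g (n - 1) l * h l j) = (\<Sum>l<n. if l = n - 1 then h (n - 1) j else 0)"
      by (rule sum.cong) (use assms(1) in \<open>auto simp: Pmir_def\<close>)
    then show ?thesis using that by (simp add: mmult_def)
  qed
  then show ?thesis
    using assms GL_mmult unfolding Pmir_def by auto
qed

lemma emb_mone: "m \<le> n \<Longrightarrow> emb m n (mone m) = mone n"
  by (intro ext) (auto simp: emb_def mone_def)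

definition superdiag_sum :: "nat \<Rightarrow> 'a::comm_monoid_add mat \<Rightarrow> 'a" where
  "superdiag_sum n A = (\<Sum>i<n - 1. A i (Suc i))"

lemma psiU_superdiag_sum: "psiU \<psi> n A = \<psi> (superdiag_sum n A)"
  by (simp add: psiU_def superdiag_sum_def)

lemma superdiag_sum_emb:
  assumes "m \<le> n"
  shows "superdiag_sum n (emb m n A) = superdiag_sum m A"
proof -
  have "(\<Sum>i<n - 1. emb m n A i (Suc i)) = (\<Sum>i<m - 1. emb m n A i (Suc i))"
    by (rule sum.mono_neutral_right) (use assms in \<open>auto simp: emb_def\<close>)
  also have "\<dots> = (\<Sum>i<m - 1. A i (Suc i))"
    by (rule sum.cong) (auto simp: emb_def)
  finally show ?thesis unfolding superdiag_sum_def .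
qed

lemma Unk_0:
  assumes "u \<in> Unk n 0"
  shows "u = mone n"
proof (intro ext)
  fix i j
  show "u i j = mone n i j"
    using assms by (cases "i < n \<and> j < n") (auto simp: Unk_def canon_def mone_def)
qed

lemma Unk_one_dim:
  assumes "u \<in> Unk 1 k"
  shows "u = mone 1"
proof (intro ext)
  fix i j
  show "u i j = mone 1 i j"
    using assms by (cases "i = 0 \<and> j = 0") (auto simp: Unk_def canon_def mone_def)
qed

lemma emb_Unk_Suc:
  assumes "k < n" "u \<in> Unk (n - k) 1"
  shows "emb (n - k) n u \<in> Unk n (Suc k)"
  using assms unfolding Unk_def canon_def emb_def by auto

lemma Unk_mono_Suc:
  assumes "Suc k \<le> n"
  shows "Unk n k \<subseteq> Unk n (Suc k)"
proof
  fix A assume A: "A \<in> Unk n k"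
  have "(j < n - Suc k \<longrightarrow> A i j = (if i = j then 1 else 0)) \<and>
      (n - Suc k \<le> i \<and> n - Suc k \<le> j \<longrightarrow> (j < i \<longrightarrow> A i j = 0) \<and> (i = j \<longrightarrow> A i j = 1))"
    if "i < n" "j < n" for i j
    using A that by (cases "j < n - k") (auto simp: Unk_def)
  then show "A \<in> Unk n (Suc k)"
    using A by (simp add: Unk_def)
qed

definition col_transv :: "nat \<Rightarrow> nat \<Rightarrow> (nat \<Rightarrow> 'f) \<Rightarrow> 'f::field mat" where
  "col_transv n m c = (\<lambda>i j. if j = m \<and> i < m \<and> m < n then c i else mone n i j)"

lemma mmult_col_transv:
  assumes "m < n" "i < n" "j < n" "\<forall>l<m. B i l = mone n i l"
  shows "mmult n B (col_transv n m c) i j = B i j + (if j = m \<and> i < m then c i else 0)"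
proof -
  have "(\<Sum>l<n. B i l * col_transv n m c l j)
      = (\<Sum>l<n. (if l = j then B i j else 0) + (if l = i then (if j = m \<and> i < m then c i else 0) else 0))"
    by (rule sum.cong) (use assms in \<open>auto simp: col_transv_def mone_def\<close>)
  then show ?thesis
    using assms by (simp add: mmult_def sum.distrib)
qed

lemma col_transv_inverse:
  assumes "m < n"
  shows "mmult n (col_transv n m c) (col_transv n m (\<lambda>i. - c i)) = mone n"
proof (intro ext)
  fix i j
  show "mmult n (col_transv n m c) (col_transv n m (\<lambda>i. - c i)) i j = mone n i j"
  proof (cases "i < n \<and> j < n")
    case True
    have "\<forall>l<m. col_transv n m c i l = mone n i l"
      by (simp add: col_transv_def)
    with True assms show ?thesis
      by (simp add: mmult_col_transv) (auto simp: col_transv_def mone_def)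
  qed (auto simp: mmult_def mone_def)
qed

lemma col_transv_Pmir:
  assumes "m < n"
  shows "col_transv n m c \<in> Pmir n"
proof -
  have "canon n (col_transv n m d)" for d :: "nat \<Rightarrow> 'a"
    by (auto simp: canon_def col_transv_def mone_def)
  moreover have "mmult n (col_transv n m (\<lambda>i. - c i)) (col_transv n m c) = mone n"
    using col_transv_inverse[OF assms, of "\<lambda>i. - c i"] by simp
  ultimately have "col_transv n m c \<in> GL n"
    unfolding GL_def using col_transv_inverse[OF assms] by blast
  then show ?thesis
    by (auto simp: Pmir_def col_transv_def mone_def)
qed

lemma emb_col_transv: "m < n \<Longrightarrow> emb (Suc m) n (col_transv (Suc m) m c) = col_transv n m c"
  by (intro ext) (auto simp: emb_def col_transv_def mone_def)

lemma col_transv_Unk: "col_transv (Suc m) m c \<in> Unk (Suc m) 1"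
  by (auto simp: Unk_def canon_def col_transv_def mone_def)

lemma Unk_Suc_factor:
  assumes u: "u \<in> Unk n (Suc k)" and k: "Suc k < n"
  defines "m \<equiv> n - Suc k"
  obtains b where "b \<in> Unk n k"
    and "u = mmult n b (col_transv n m (\<lambda>i. u i m))"
    and "superdiag_sum n u = superdiag_sum n b + superdiag_sum n (col_transv n m (\<lambda>i. u i m))"
proof
  define b where "b = (\<lambda>i j. if j = m then mone n i j else u i j)"
  have m: "m < n" "n - k = Suc m"
    using k unfolding m_def by auto
  have u_canon: "canon n u"
    using u by (simp add: Unk_def)
  have u_entries: "(j < m \<longrightarrow> u i j = (if i = j then 1 else 0)) \<and>
      (m \<le> i \<and> m \<le> j \<longrightarrow> (j < i \<longrightarrow> u i j = 0) \<and> (i = j \<longrightarrow> u i j = 1))"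
    if "i < n" "j < n" for i j
    using u that unfolding Unk_def m_def by blast
  show "b \<in> Unk n k"
    using u_canon u_entries m unfolding Unk_def b_def by (auto simp: canon_def mone_def)
  show "u = mmult n b (col_transv n m (\<lambda>i. u i m))"
  proof (intro ext)
    fix i j
    show "u i j = mmult n b (col_transv n m (\<lambda>i. u i m)) i j"
    proof (cases "i < n \<and> j < n")
      case True
      have "\<forall>l<m. b i l = mone n i l"
        using u_entries True m(1) by (auto simp: b_def mone_def)
      with True m(1) have "mmult n b (col_transv n m (\<lambda>i. u i m)) i j
          = b i j + (if j = m \<and> i < m then u i m else 0)"
        by (simp add: mmult_col_transv)
      also have "\<dots> = u i j"
        using u_entries[of i j] True by (cases i m rule: linorder_cases) (auto simp: b_def mone_def)
      finally show ?thesis ..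
    qed (use u_canon in \<open>auto simp: canon_def mmult_def\<close>)
  qed
  have "u i (Suc i) = b i (Suc i) + col_transv n m (\<lambda>i. u i m) i (Suc i)" if "i < n - 1" for i
    using that m(1) by (auto simp: b_def col_transv_def mone_def)
  then show "superdiag_sum n u = superdiag_sum n b + superdiag_sum n (col_transv n m (\<lambda>i. u i m))"
    by (simp add: superdiag_sum_def sum.distrib)
qed

lemma phi_sub_Suc_col_transv:
  assumes "k < n"
  shows "\<rho> (col_transv n (n - Suc k) c) x - sm (psiU \<psi> n (col_transv n (n - Suc k) c)) x
    \<in> phi_sub n sm \<rho> \<psi> (Suc k)"
proof -
  let ?a = "col_transv (n - k) (n - Suc k) c"
  have nk: "n - k = Suc (n - Suc k)"
    using assms by simp
  have "?a \<in> Unk (n - k) 1"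
    unfolding nk by (rule col_transv_Unk)
  moreover have "emb (n - k) n ?a = col_transv n (n - Suc k) c"
    unfolding nk using assms by (simp add: emb_col_transv)
  moreover have "psiU \<psi> n (emb (n - k) n ?a) = psiU \<psi> (n - k) ?a"
    by (simp add: psiU_superdiag_sum superdiag_sum_emb)
  ultimately show ?thesis
    using phi_sub_Suc_generator by metis
qed

lemma Unk_subset_Pmir: "k < n \<Longrightarrow> Unk n k \<subseteq> (Pmir n :: 'f::field mat set)"
proof (induction k)
  case 0
  then show ?case
    using Unk_0 mone_Pmir by blast
next
  case (Suc k)
  show ?case
  proof
    fix u :: "'f mat" assume "u \<in> Unk n (Suc k)"
    then obtain b where b: "b \<in> Unk n k"
      and u: "u = mmult n b (col_transv n (n - Suc k) (\<lambda>i. u i (n - Suc k)))"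
      using Unk_Suc_factor Suc.prems by metis
    have "b \<in> Pmir n"
      using Suc b by auto
    moreover have "col_transv n (n - Suc k) (\<lambda>i. u i (n - Suc k)) \<in> Pmir n"
      using Suc.prems by (simp add: col_transv_Pmir)
    ultimately show "u \<in> Pmir n"
      by (subst u) (rule Pmir_mmult)
  qed
qed

lemma coinv_sub_generator_in_phi_sub:
  assumes rep: "prep n sm \<rho>"
    and \<psi>_add: "\<And>x y. \<psi> (x + y) = \<psi> x * \<psi> y" and \<psi>_0: "\<psi> 0 = 1"
  shows "k < n \<Longrightarrow> u \<in> Unk n k \<Longrightarrow> \<rho> u x - sm (psiU \<psi> n u) x \<in> phi_sub n sm \<rho> \<psi> k"
proof (induction k arbitrary: u x)
  case 0
  then have "u = mone n"
    by (simp add: Unk_0)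
  moreover have "psiU \<psi> n (mone n) = 1"
    using \<psi>_0 by (simp add: psiU_superdiag_sum superdiag_sum_def mone_def)
  moreover have "\<rho> (mone n) x = x" "sm 1 x = x"
    using rep by (simp_all add: prep_def rmod_def)
  ultimately show ?case
    by simp
next
  case (Suc k)
  have k: "k < n"
    using Suc.prems(1) by simp
  have rm: "rmod sm"
    using rep by (simp add: prep_def)
  define a where "a = col_transv n (n - Suc k) (\<lambda>i. u i (n - Suc k))"
  obtain b where b: "b \<in> Unk n k" and u: "u = mmult n b a"
    and sum: "superdiag_sum n u = superdiag_sum n b + superdiag_sum n a"
    using Unk_Suc_factor[OF Suc.prems(2,1)] unfolding a_def by metis
  have "b \<in> Pmir n"
    using Unk_subset_Pmir[OF k] b by blast
  moreover have "a \<in> Pmir n"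
    unfolding a_def using Suc.prems(1) by (simp add: col_transv_Pmir)
  ultimately have \<rho>_u: "\<rho> u x = \<rho> b (\<rho> a x)"
    using rep unfolding u prep_def by blast
  have \<psi>_u: "sm (psiU \<psi> n u) x = sm (psiU \<psi> n b) (sm (psiU \<psi> n a) x)"
    using rm sum by (simp add: psiU_superdiag_sum \<psi>_add rmod_def)
  let ?W = "phi_sub n sm \<rho> \<psi> (Suc k)"
  have W: "submod sm ?W"
    by (rule submod_phi_sub[OF rm])
  have "\<rho> b (\<rho> a x) - sm (psiU \<psi> n b) (\<rho> a x) \<in> phi_sub n sm \<rho> \<psi> k"
    by (rule Suc.IH[OF k b])
  then have first: "\<rho> b (\<rho> a x) - sm (psiU \<psi> n b) (\<rho> a x) \<in> ?W"
    using phi_sub_mono_Suc by blast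
  have "\<rho> a x - sm (psiU \<psi> n a) x \<in> ?W"
    unfolding a_def by (rule phi_sub_Suc_col_transv[OF k])
  then have second: "sm (psiU \<psi> n b) (\<rho> a x - sm (psiU \<psi> n a) x) \<in> ?W"
    using W by (simp add: submod_def)
  have "\<rho> b (\<rho> a x) - sm (psiU \<psi> n b) (\<rho> a x) + sm (psiU \<psi> n b) (\<rho> a x - sm (psiU \<psi> n a) x) \<in> ?W"
    using first second W by (simp add: submod_def)
  then show ?case
    unfolding \<rho>_u \<psi>_u by (simp add: rmod_scale_diff[OF rm])
qed

lemma phi_sub_subset_coinv_sub: "k < n \<Longrightarrow> phi_sub n sm \<rho> \<psi> k \<subseteq> coinv_sub n sm \<rho> \<psi> k"
proof (induction k)
  case 0
  have "0 \<in> coinv_sub n sm \<rho> \<psi> 0"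
    using submod_rspan unfolding coinv_sub_def submod_def by blast
  then show ?case
    by simp
next
  case (Suc k)
  have "phi_sub n sm \<rho> \<psi> k \<subseteq> coinv_sub n sm \<rho> \<psi> k"
    using Suc by simp
  also have "coinv_sub n sm \<rho> \<psi> k \<subseteq> coinv_sub n sm \<rho> \<psi> (Suc k)"
    using Unk_mono_Suc[of k n] Suc.prems unfolding coinv_sub_def by (intro rspan_mono) auto
  finally have "phi_sub n sm \<rho> \<psi> k \<subseteq> coinv_sub n sm \<rho> \<psi> (Suc k)" .
  moreover have "\<rho> (emb (n - k) n u) x - sm (psiU \<psi> (n - k) u) x \<in> coinv_sub n sm \<rho> \<psi> (Suc k)"
    if "u \<in> Unk (n - k) 1" for u x
  proof -
    have "psiU \<psi> (n - k) u = psiU \<psi> n (emb (n - k) n u)"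
      by (simp add: psiU_superdiag_sum superdiag_sum_emb)
    moreover have "emb (n - k) n u \<in> Unk n (Suc k)"
      using Suc.prems that by (simp add: emb_Unk_Suc)
    ultimately show ?thesis
      unfolding coinv_sub_def using rspan_superset by fastforce
  qed
  ultimately show ?case
    unfolding phi_sub.simps coinv_sub_def by (intro rspan_least submod_rspan) blast
qed

lemma phi_sub_eq_coinv_sub:
  assumes "prep n sm \<rho>" "k < n"
    and "\<And>x y. \<psi> (x + y) = \<psi> x * \<psi> y" "\<psi> 0 = 1"
  shows "phi_sub n sm \<rho> \<psi> k = coinv_sub n sm \<rho> \<psi> k"
proof
  show "phi_sub n sm \<rho> \<psi> k \<subseteq> coinv_sub n sm \<rho> \<psi> k"
    using assms(2) by (rule phi_sub_subset_coinv_sub)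
  have "submod sm (phi_sub n sm \<rho> \<psi> k)"
    using assms(1) by (simp add: prep_def submod_phi_sub)
  then show "coinv_sub n sm \<rho> \<psi> k \<subseteq> phi_sub n sm \<rho> \<psi> k"
    unfolding coinv_sub_def using coinv_sub_generator_in_phi_sub[OF assms(1,3,4,2)] by (intro rspan_least) auto
qed

lemma deriv_sub_top_eq_phi_sub:
  fixes \<rho> :: "'f::field mat \<Rightarrow> 'v::ab_group_add \<Rightarrow> 'v"
  assumes "prep n sm \<rho>" "1 \<le> n"
  shows "deriv_sub n sm \<rho> \<psi> n = phi_sub n sm \<rho> \<psi> (n - 1)"
proof -
  have "\<rho> (emb 1 n u) x - x = 0" if "u \<in> Unk 1 1" for u :: "'f mat" and x
  proof -
    have "emb 1 n u = mone n"
      using Unk_one_dim[OF that] emb_mone assms(2) by blast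
    then show ?thesis
      using assms(1) by (simp add: prep_def)
  qed
  moreover have "submod sm (phi_sub n sm \<rho> \<psi> (n - 1))"
    using assms(1) by (simp add: prep_def submod_phi_sub)
  ultimately show ?thesis
    unfolding deriv_sub_def by (subst rspan_Un_absorb) (auto simp: submod_def)
qed

lemma quot_iso_refl: "quot_iso sm \<rho> G W W"
  unfolding quot_iso_def by (rule exI[of _ id]) simp

theorem lemma2p4:
  fixes \<psi> :: "'f::{field,finite} \<Rightarrow> 'r::comm_ring_1"
    and \<zeta> :: 'r and \<chi> :: "'f \<Rightarrow> nat" and p e n k :: nat
    and sm :: "'r \<Rightarrow> 'v::ab_group_add \<Rightarrow> 'v" and \<rho> :: "'f mat \<Rightarrow> 'v \<Rightarrow> 'v"
  assumes "prime p" and "e \<ge> 1" and "card (UNIV :: 'f set) = p ^ e"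
    and "noetherian TYPE('r)"
    and "\<exists>u::'r. of_nat p * u = 1"
    and "(\<Sum>j<p. \<zeta> ^ j) = 0"
    and "\<forall>x y. [\<chi> (x + y) = \<chi> x + \<chi> y] (mod p)"
    and "\<exists>x. \<not> p dvd \<chi> x"
    and "\<forall>x. \<psi> x = \<zeta> ^ \<chi> x"
    and "1 \<le> n" and "k \<le> n - 1"
    and "prep n sm \<rho>"
  shows "quot_iso sm \<rho> (emb (n - k) n ` Pmir (n - k)) (phi_sub n sm \<rho> \<psi> k) (coinv_sub n sm \<rho> \<psi> k)
       \<and> quot_iso sm \<rho> {} (deriv_sub n sm \<rho> \<psi> n) (coinv_sub n sm \<rho> \<psi> (n - 1))"
proof -
  \<comment> \<open>Only that \<psi> is a homomorphism from \<open>(F_q, +)\<close> to \<open>R\<^sup>\<times>\<close> is used; the remaining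
    hypotheses on \<open>p\<close>, \<open>q\<close> and \<open>R\<close> just fix the setting of the paper.\<close>
  have "\<zeta> ^ p = 1"
    using one_diff_power_eq[of \<zeta> p] assms(6) by simp
  note \<psi>_character = additive_character[OF this assms(7) assms(9)]
  have "phi_sub n sm \<rho> \<psi> j = coinv_sub n sm \<rho> \<psi> j" if "j \<le> n - 1" for j
    using that assms(10) by (intro phi_sub_eq_coinv_sub[OF assms(12) _ \<psi>_character]) simp
  moreover have "deriv_sub n sm \<rho> \<psi> n = phi_sub n sm \<rho> \<psi> (n - 1)"
    using assms(12,10) by (rule deriv_sub_top_eq_phi_sub)
  ultimately show ?thesis
    using assms(11) by (simp add: quot_iso_refl)
qed

end
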